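(* Let $b_0,b_1,\ldots,b_p\in\mathbb R^n$ and $-\infty\le l_i\le u_i\le+\infty$ for $i=1,\ldots,p$. Consider \[ {\rm (U)}\quad \max_{x\in\mathbb R^n}\ x^Tx+b_0^Tx\quad \text{s.t.}\quad l_i\le x^Tx+2b_i^Tx\le u_i,\ i=1,\ldots,p, \] and the second-order cone programming relaxation \[ {\rm (S)}\quad \max_{x\in\mathbb R^n,\,t\in\mathbb R}\ t+b_0^Tx\quad \text{s.t.}\quad l_i\le t+2b_i^Tx\le u_i,\ i=1,\ldots,p,\qquad \left\|\begin{pmatrix} x\\ \frac{t-1}{2}\end{pmatrix}\right\|\le \frac{t+1}{2}. \] Suppose that either ${\rm rank}[b_1,\ldots,b_p]\le n-1$ or $p=n$. Then (U) is equivalent to (S), in the sense that $x^*$ globally solves (U) if and only if $(x^*,t^* ):=(x^*,x^{*T}x^* )$ globally solves (S).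
   Context: $\|\cdot\|$ is the Euclidean norm. *)

theory Defs
  imports "HOL-Analysis.Analysis" "HOL-Library.Extended_Real"
begin

definition feasible_U :: "nat \<Rightarrow> (nat \<Rightarrow> real^'n) \<Rightarrow> (nat \<Rightarrow> ereal) \<Rightarrow> (nat \<Rightarrow> ereal) \<Rightarrow> real^'n \<Rightarrow> bool" where
  "feasible_U p b l u x \<longleftrightarrow>
     (\<forall>i\<in>{1..p}. l i \<le> ereal (x \<bullet> x + 2 * (b i \<bullet> x)) \<and> ereal (x \<bullet> x + 2 * (b i \<bullet> x)) \<le> u i)"

definition obj_U :: "(nat \<Rightarrow> real^'n) \<Rightarrow> real^'n \<Rightarrow> real" where
  "obj_U b x = x \<bullet> x + b 0 \<bullet> x"

definition solves_U :: "nat \<Rightarrow> (nat \<Rightarrow> real^'n) \<Rightarrow> (nat \<Rightarrow> ereal) \<Rightarrow> (nat \<Rightarrow> ereal) \<Rightarrow> real^'n \<Rightarrow> bool" where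
  "solves_U p b l u x \<longleftrightarrow> feasible_U p b l u x \<and>
     (\<forall>y. feasible_U p b l u y \<longrightarrow> obj_U b y \<le> obj_U b x)"

text \<open>Feasible set of (S); the norm of the pair (x, (t-1)/2) is the Euclidean norm on R^(n+1).\<close>
definition feasible_S :: "nat \<Rightarrow> (nat \<Rightarrow> real^'n) \<Rightarrow> (nat \<Rightarrow> ereal) \<Rightarrow> (nat \<Rightarrow> ereal) \<Rightarrow> real^'n \<Rightarrow> real \<Rightarrow> bool" where
  "feasible_S p b l u x t \<longleftrightarrow>
     (\<forall>i\<in>{1..p}. l i \<le> ereal (t + 2 * (b i \<bullet> x)) \<and> ereal (t + 2 * (b i \<bullet> x)) \<le> u i) \<and>
     norm (x, (t - 1) / 2) \<le> (t + 1) / 2"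

definition obj_S :: "(nat \<Rightarrow> real^'n) \<Rightarrow> real^'n \<Rightarrow> real \<Rightarrow> real" where
  "obj_S b x t = t + b 0 \<bullet> x"

definition solves_S :: "nat \<Rightarrow> (nat \<Rightarrow> real^'n) \<Rightarrow> (nat \<Rightarrow> ereal) \<Rightarrow> (nat \<Rightarrow> ereal) \<Rightarrow> real^'n \<Rightarrow> real \<Rightarrow> bool" where
  "solves_S p b l u x t \<longleftrightarrow> feasible_S p b l u x t \<and>
     (\<forall>y s. feasible_S p b l u y s \<longrightarrow> obj_S b y s \<le> obj_S b x t)"

definition rank_cols :: "nat \<Rightarrow> (nat \<Rightarrow> real^'n) \<Rightarrow> nat" where
  "rank_cols p b = dim (span (b ` {1..p}))"

end

theory Submission
  imports Defs
begin

text \<open>The cone constraint of (S) says exactly \<open>x\<^sup>T x \<le> t\<close>, so (U) is (S) restricted to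
  \<open>t = x\<^sup>T x\<close> and the two problems can only differ when a point \<open>(y, s)\<close> with \<open>y\<^sup>T y < s\<close>
  beats every point of (U). The rank condition, or \<open>p = n\<close>, yields a direction \<open>d \<noteq> 0\<close> along
  which all \<open>b\<^sub>i\<^sup>T x\<close>, \<open>i \<ge> 1\<close>, change at the same rate \<open>c\<close>. Moving \<open>y\<close> to \<open>z = y + \<mu> d\<close>, with \<open>\<mu>\<close> a root
  of \<open>z\<^sup>T z + 2 c \<mu> = s\<close>, keeps every \<open>t + 2 b\<^sub>i\<^sup>T x\<close> unchanged, and of the two roots (of
  opposite signs) one does not decrease the objective.\<close>

lemma norm_rotated_cone_le_iff:
  fixes x :: "'a::real_inner"
  shows "norm (x, (t - 1) / 2) \<le> (t + 1) / 2 \<longleftrightarrow> x \<bullet> x \<le> t"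
proof -
  have "norm (x, (t - 1) / 2) \<le> (t + 1) / 2 \<longleftrightarrow>
      0 \<le> (t + 1) / 2 \<and> x \<bullet> x + ((t - 1) / 2)\<^sup>2 \<le> ((t + 1) / 2)\<^sup>2"
    by (simp only: norm_le_square inner_Pair inner_real_def power2_eq_square)
  also have "((t + 1) / 2)\<^sup>2 = ((t - 1) / 2)\<^sup>2 + t"
    by (simp add: power2_eq_square field_simps)
  finally have "norm (x, (t - 1) / 2) \<le> (t + 1) / 2 \<longleftrightarrow> 0 \<le> t + 1 \<and> x \<bullet> x \<le> t"
    by simp
  then show ?thesis
    using inner_ge_zero[of x] by linarith
qed

lemma quadratic_root_of_sign:
  fixes a \<beta> \<gamma> k :: real
  assumes "0 < a" "\<gamma> \<le> 0"
  obtains c where "0 \<le> c * k" "a * c\<^sup>2 + 2 * \<beta> * c + \<gamma> = 0"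
proof -
  define r where "r = sqrt (\<beta>\<^sup>2 - a * \<gamma>)"
  have "\<beta>\<^sup>2 \<le> \<beta>\<^sup>2 - a * \<gamma>"
    using assms mult_nonneg_nonpos[of a \<gamma>] by linarith
  moreover have "0 \<le> \<beta>\<^sup>2 - a * \<gamma>"
    using calculation zero_le_power2[of \<beta>] by linarith
  ultimately have r2: "r\<^sup>2 = \<beta>\<^sup>2 - a * \<gamma>" and r: "\<bar>\<beta>\<bar> \<le> r"
    unfolding r_def by (simp_all add: real_le_rsqrt)
  have root: "a * ((s - \<beta>) / a)\<^sup>2 + 2 * \<beta> * ((s - \<beta>) / a) + \<gamma> = 0"
    if "s\<^sup>2 = r\<^sup>2" for s
  proof -
    have "a * ((s - \<beta>) / a)\<^sup>2 + 2 * \<beta> * ((s - \<beta>) / a) = (s\<^sup>2 - \<beta>\<^sup>2) / a"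
      using assms(1) by (simp add: power2_eq_square field_simps)
    also have "\<dots> = - \<gamma>"
      using assms(1) that r2 by simp
    finally show ?thesis by simp
  qed
  show thesis
  proof (cases "0 \<le> k")
    case True
    have "0 \<le> (r - \<beta>) / a" using r assms(1) by simp
    then have "0 \<le> (r - \<beta>) / a * k"
      using True by (rule mult_nonneg_nonneg)
    then show thesis by (rule that) (rule root, rule refl)
  next
    case False
    have "(- r - \<beta>) / a \<le> 0" using r assms(1) by (simp add: divide_nonpos_pos)
    then have "0 \<le> (- r - \<beta>) / a * k"
      using False by (intro mult_nonpos_nonpos) simp_all
    then show thesis by (rule that) (rule root, simp)
  qed
qed

lemma exists_nonzero_orthogonal:
  fixes S :: "'a::euclidean_space set"
  assumes "dim S < DIM('a)"
  obtains d where "d \<noteq> 0" "\<forall>x\<in>S. x \<bullet> d = 0"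
  using orthogonal_to_subspace_exists[OF assms]
  by (metis orthogonal_def inner_commute span_base)

lemma exists_common_rate_direction:
  fixes b :: "nat \<Rightarrow> 'a::euclidean_space"
  assumes "dim (b ` {1..p}) < DIM('a) \<or> p = DIM('a)"
  obtains d c where "d \<noteq> 0" "\<forall>i\<in>{1..p}. b i \<bullet> d = c"
proof (cases "dim (b ` {1..p}) < DIM('a)")
  case True
  then obtain d where "d \<noteq> 0" "\<forall>x\<in>b ` {1..p}. x \<bullet> d = 0"
    by (rule exists_nonzero_orthogonal)
  then show thesis by (intro that[of d 0]) auto
next
  case False
  then have p: "p = DIM('a)" using assms by simp
  define D where "D = (\<lambda>i. b i - b 1) ` {2..p}"
  have "dim D \<le> card {2..p}"
    unfolding D_def by (intro dim_le_card'[THEN order_trans] card_image_le) auto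
  also have "\<dots> < DIM('a)" using p by simp
  finally obtain d where d: "d \<noteq> 0" "\<forall>x\<in>D. x \<bullet> d = 0"
    by (rule exists_nonzero_orthogonal)
  have "\<forall>i\<in>{1..p}. b i \<bullet> d = b 1 \<bullet> d"
  proof
    fix i assume "i \<in> {1..p}"
    then consider "i = 1" | "i \<in> {2..p}" by fastforce
    then show "b i \<bullet> d = b 1 \<bullet> d"
      using d(2) by cases (auto simp: D_def inner_diff_left)
  qed
  with d(1) show thesis by (rule that)
qed

lemma feasible_S_square_iff: "feasible_S p b l u x (x \<bullet> x) \<longleftrightarrow> feasible_U p b l u x"
  unfolding feasible_S_def feasible_U_def norm_rotated_cone_le_iff by simp

lemma obj_S_square: "obj_S b x (x \<bullet> x) = obj_U b x"
  by (simp add: obj_S_def obj_U_def)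

lemma feasible_S_lift_to_U:
  fixes b :: "nat \<Rightarrow> real^'n"
  assumes d: "d \<noteq> 0" "\<forall>i\<in>{1..p}. b i \<bullet> d = c" and S: "feasible_S p b l u y s"
  obtains z where "feasible_U p b l u z" "obj_S b y s \<le> obj_U b z"
proof -
  from S have lin: "\<forall>i\<in>{1..p}. l i \<le> ereal (s + 2 * (b i \<bullet> y)) \<and> ereal (s + 2 * (b i \<bullet> y)) \<le> u i"
    and "y \<bullet> y - s \<le> 0"
    unfolding feasible_S_def norm_rotated_cone_le_iff by auto
  moreover have "0 < d \<bullet> d" using d(1) by simp
  ultimately obtain \<mu> where sign: "0 \<le> \<mu> * (b 0 \<bullet> d - 2 * c)"
    and root: "(d \<bullet> d) * \<mu>\<^sup>2 + 2 * (y \<bullet> d + c) * \<mu> + (y \<bullet> y - s) = 0"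
    using quadratic_root_of_sign by blast
  define z where "z = y + \<mu> *\<^sub>R d"
  have zz: "z \<bullet> z = s - 2 * c * \<mu>"
    using root by (simp add: z_def inner_add inner_commute algebra_simps power2_eq_square)
  have "b i \<bullet> z = b i \<bullet> y + \<mu> * c" if "i \<in> {1..p}" for i
    using d(2) that by (simp add: z_def inner_add_right)
  then have "z \<bullet> z + 2 * (b i \<bullet> z) = s + 2 * (b i \<bullet> y)" if "i \<in> {1..p}" for i
    using zz that by (simp add: algebra_simps)
  then have "feasible_U p b l u z"
    using lin by (simp add: feasible_U_def)
  moreover have "obj_U b z = obj_S b y s + \<mu> * (b 0 \<bullet> d - 2 * c)"
    using zz by (simp add: obj_U_def obj_S_def z_def inner_add_right algebra_simps)
  ultimately show thesis
    using sign by (intro that) auto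
qed

lemma solves_U_iff_solves_S_square:
  fixes b :: "nat \<Rightarrow> real^'n"
  assumes "d \<noteq> 0" "\<forall>i\<in>{1..p}. b i \<bullet> d = c"
  shows "solves_U p b l u x \<longleftrightarrow> solves_S p b l u x (x \<bullet> x)"
proof
  assume U: "solves_U p b l u x"
  have "obj_S b y s \<le> obj_S b x (x \<bullet> x)" if yS: "feasible_S p b l u y s" for y s
  proof -
    obtain z where "feasible_U p b l u z" "obj_S b y s \<le> obj_U b z"
      using feasible_S_lift_to_U[OF assms yS] .
    with U show ?thesis by (auto simp: solves_U_def obj_S_square)
  qed
  with U show "solves_S p b l u x (x \<bullet> x)"
    by (simp add: solves_U_def solves_S_def feasible_S_square_iff)
next
  assume "solves_S p b l u x (x \<bullet> x)"
  then show "solves_U p b l u x"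
    unfolding solves_S_def solves_U_def
    by (metis feasible_S_square_iff obj_S_square)
qed

theorem theorem1:
  fixes p :: nat and b :: "nat \<Rightarrow> real^'n" and l u :: "nat \<Rightarrow> ereal" and xs :: "real^'n"
  assumes "\<forall>i\<in>{1..p}. l i \<le> u i"
    and "rank_cols p b \<le> CARD('n) - 1 \<or> p = CARD('n)"
  shows "solves_U p b l u xs \<longleftrightarrow> solves_S p b l u xs (xs \<bullet> xs)"
proof -
  have "0 < CARD('n)" by simp
  moreover have "rank_cols p b = dim (b ` {1..p})" by (simp add: rank_cols_def)
  ultimately have "dim (b ` {1..p}) < DIM(real^'n) \<or> p = DIM(real^'n)"
    using assms(2) by (simp only: DIM_cart DIM_real mult_1_right) arith
  then obtain d c where "d \<noteq> 0" "\<forall>i\<in>{1..p}. b i \<bullet> d = c"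
    by (rule exists_common_rate_direction)
  then show ?thesis by (rule solves_U_iff_solves_S_square)
qed

end
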